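(* Let $n,k,r$ be integers with $k,r\geq 2$ and $n\geq 2k$, and write $n=pk+q$ with integers $p,q$ and $1\leq q\leq k$. Let $H_U(n;k,r)$ be the $r$-uniform hypergraph whose vertex set is a disjoint union $A\cup B_1\cup\cdots\cup B_p$ with $|A|=k$, $|B_i|=k$ for $1\leq i\leq p-1$ and $|B_p|=q$, and whose edges are exactly the $r$-subsets $e$ of the vertex set such that either $e$ meets both $A$ and $B_1\cup\cdots\cup B_p$, or $e\subseteq B_i$ for some $i$ (i.e. $H_U(n;k,r)=((p-1)K_k^r\cup K_q^r)\vee_r (K_k^r)^c$). Then $H_U(n;k,r)$ is vertex-$k$-maximal, and $|E(H_U(n;k,r))|\leq \binom{n}{r}-\binom{n-k}{r}+\left(\frac{n}{k}-2\right)\binom{k}{r}$, with equality if $n$ is a multiple of $k$.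
   Context: Binomial coefficients satisfy $\binom{a}{b}=0$ when $b>a$. A hypergraph $H=(V,E)$ consists of a finite vertex set $V$ and a set $E$ of non-empty subsets of $V$ (edges); it is $r$-uniform if all edges have exactly $r$ elements. The complement $H^c$ has as edges the $r$-subsets of $V$ not in $E$. A subhypergraph is $H'=(V',E')$ with $V'\subseteq V$, $E'\subseteq E$. $H+e=(V,E\cup\{e\})$ for $e\in E(H^c)$. $H-Y$ is the hypergraph induced on $V\setminus Y$ (keeping edges contained in $V\setminus Y$). Connectedness is defined via paths (alternating sequences of distinct vertices and distinct edges with consecutive vertices in the intermediate edge). A vertex-cut is a set $X$ with $H-X$ disconnected. $\kappa(H)$ is the minimum size of a vertex-cut if one exists, and $|V(H)|-1$ otherwise. $\overline{\kappa}(H)=\max\{\kappa(H'): H'\subseteq H\}$. An $r$-uniform hypergraph $H$ is vertex-$k$-maximal if $\overline{\kappa}(H)\leq k$ but $\overline{\kappa}(H+e)\geq k+1$ for every $e\in E(H^c)$. *)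

theory Defs
  imports Complex_Main
begin

definition is_hypergraph :: "'a set \<Rightarrow> 'a set set \<Rightarrow> bool" where
  "is_hypergraph V E \<longleftrightarrow> finite V \<and> (\<forall>e\<in>E. e \<noteq> {} \<and> e \<subseteq> V)"

definition uniform :: "nat \<Rightarrow> 'a set \<Rightarrow> 'a set set \<Rightarrow> bool" where
  "uniform r V E \<longleftrightarrow> is_hypergraph V E \<and> (\<forall>e\<in>E. card e = r)"

definition is_path :: "'a set set \<Rightarrow> 'a list \<Rightarrow> 'a set list \<Rightarrow> bool" where
  "is_path E vs es \<longleftrightarrow> vs \<noteq> [] \<and> length es = length vs - 1 \<and> distinct vs \<and> distinct es \<and>
     (\<forall>i < length es. es ! i \<in> E \<and> vs ! i \<in> es ! i \<and> vs ! Suc i \<in> es ! i)"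

definition hconnected :: "'a set \<Rightarrow> 'a set set \<Rightarrow> bool" where
  "hconnected V E \<longleftrightarrow>
     (\<forall>u\<in>V. \<forall>v\<in>V. \<exists>vs es. is_path E vs es \<and> hd vs = u \<and> last vs = v)"

definition del_edges :: "'a set \<Rightarrow> 'a set set \<Rightarrow> 'a set \<Rightarrow> 'a set set" where
  "del_edges V E Y = {e \<in> E. e \<subseteq> V - Y}"

definition vertex_cut :: "'a set \<Rightarrow> 'a set set \<Rightarrow> 'a set \<Rightarrow> bool" where
  "vertex_cut V E X \<longleftrightarrow> X \<subseteq> V \<and> \<not> hconnected (V - X) (del_edges V E X)"

definition kappa :: "'a set \<Rightarrow> 'a set set \<Rightarrow> nat" where
  "kappa V E = (if \<exists>X. vertex_cut V E X
                then (LEAST m. \<exists>X. vertex_cut V E X \<and> card X = m)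
                else card V - 1)"

definition kappa_bar :: "'a set \<Rightarrow> 'a set set \<Rightarrow> nat" where
  "kappa_bar V E = Max {kappa V' E' | V' E'. V' \<subseteq> V \<and> E' \<subseteq> E \<and> is_hypergraph V' E'}"

definition compl_edges :: "nat \<Rightarrow> 'a set \<Rightarrow> 'a set set \<Rightarrow> 'a set set" where
  "compl_edges r V E = {e. e \<subseteq> V \<and> card e = r} - E"

definition vertex_k_maximal :: "nat \<Rightarrow> nat \<Rightarrow> 'a set \<Rightarrow> 'a set set \<Rightarrow> bool" where
  "vertex_k_maximal r k V E \<longleftrightarrow> uniform r V E \<and> kappa_bar V E \<le> k \<and>
     (\<forall>e \<in> compl_edges r V E. kappa_bar V (insert e E) \<ge> k + 1)"

definition HU_vertices :: "'a set \<Rightarrow> (nat \<Rightarrow> 'a set) \<Rightarrow> nat \<Rightarrow> 'a set" where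
  "HU_vertices A B p = A \<union> (\<Union>i\<in>{1..p}. B i)"

definition HU_edges :: "nat \<Rightarrow> 'a set \<Rightarrow> (nat \<Rightarrow> 'a set) \<Rightarrow> nat \<Rightarrow> 'a set set" where
  "HU_edges r A B p = {e. e \<subseteq> HU_vertices A B p \<and> card e = r \<and>
      ((e \<inter> A \<noteq> {} \<and> e \<inter> (\<Union>i\<in>{1..p}. B i) \<noteq> {}) \<or> (\<exists>i\<in>{1..p}. e \<subseteq> B i))}"

end

theory Submission
  imports Defs
begin

text \<open>
  Upper bound: in a subhypergraph on at least k + 2 vertices, either all vertices outside A lie in
  one block, and deleting them leaves at least two vertices of A and no edge (no edge lies inside A),
  or there are vertices in two different blocks, and deleting the at most k vertices of A separates
  them, because every remaining edge lies inside a single block.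

  Maximality: a new edge e either lies inside A or meets at least two blocks. If e \<subseteq> A, the vertex
  set e \<union> B_1 survives the deletion of any k vertices; otherwise e meets a full block B_i and
  A \<union> e \<union> B_i (or A \<union> e when r > k) does. In both cases every r-set crossing A is an edge, so
  what remains is connected as soon as it meets A and its complement, and the only one-sided
  remainders are spanned by e and by complete blocks.

  The edge count splits into the r-sets crossing A and the r-subsets of the blocks; the bound uses
  k \<cdot> C(q,r) \<le> q \<cdot> C(k,r) for q \<le> k.
\<close>

lemma hconnectedI_diameter2:
  assumes "\<And>u v. u \<in> R \<Longrightarrow> v \<in> R \<Longrightarrow> u \<noteq> v \<Longrightarrow> (\<exists>f\<in>F. u \<in> f \<and> v \<in> f) \<or>
     (\<exists>w f g. f \<in> F \<and> g \<in> F \<and> f \<noteq> g \<and> u \<in> f \<and> w \<in> f \<and> w \<in> g \<and> v \<in> g \<and> u \<noteq> w \<and> w \<noteq> v)"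
  shows "hconnected R F"
  unfolding hconnected_def
proof (intro ballI)
  fix u v assume u: "u \<in> R" and v: "v \<in> R"
  show "\<exists>vs es. is_path F vs es \<and> hd vs = u \<and> last vs = v"
  proof (cases "u = v")
    case True
    have "is_path F [u] []" by (simp add: is_path_def)
    then show ?thesis using True by force
  next
    case False
    from assms[OF u v False] show ?thesis
    proof
      assume "\<exists>f\<in>F. u \<in> f \<and> v \<in> f"
      then obtain f where "f \<in> F" "u \<in> f" "v \<in> f" by blast
      then have "is_path F [u, v] [f]" using False by (simp add: is_path_def)
      then show ?thesis by force
    next
      assume "\<exists>w f g. f \<in> F \<and> g \<in> F \<and> f \<noteq> g \<and> u \<in> f \<and> w \<in> f \<and> w \<in> g \<and> v \<in> g \<and> u \<noteq> w \<and> w \<noteq> v"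
      then obtain w f g where "f \<in> F" "g \<in> F" "f \<noteq> g" "u \<in> f" "w \<in> f" "w \<in> g" "v \<in> g" "u \<noteq> w" "w \<noteq> v"
        by blast
      then have "is_path F [u, w, v] [f, g]" using False by (auto simp: is_path_def less_Suc_eq)
      then show ?thesis by force
    qed
  qed
qed

lemma obtain_subset_through_pair:
  assumes "finite R" "x \<in> R" "y \<in> R" "2 \<le> r" "r \<le> card R"
  obtains f where "x \<in> f" "y \<in> f" "f \<subseteq> R" "card f = r"
proof -
  have xy: "{x, y} \<subseteq> R" using assms(2,3) by simp
  have card_xy: "card {x, y} \<le> r" using assms(4) by (cases "x = y") simp_all
  have "card (R - {x, y}) = card R - card {x, y}" using card_Diff_subset[OF _ xy] by simp
  then have "r - card {x, y} \<le> card (R - {x, y})" using assms(5) by simp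
  then obtain T where T: "T \<subseteq> R - {x, y}" "card T = r - card {x, y}"
    by (meson obtain_subset_with_card_n)
  have "finite T" using T(1) assms(1) finite_subset by blast
  then have "card ({x, y} \<union> T) = card {x, y} + card T" using T(1) by (intro card_Un_disjoint) auto
  then have "card ({x, y} \<union> T) = r" using T(2) card_xy by simp
  with T(1) xy show ?thesis by (intro that[of "{x, y} \<union> T"]) auto
qed

lemma hconnected_complete:
  assumes "finite R" "2 \<le> r" "r \<le> card R" and complete: "\<And>f. f \<subseteq> R \<Longrightarrow> card f = r \<Longrightarrow> f \<in> F"
  shows "hconnected R F"
proof (rule hconnectedI_diameter2)
  fix u v assume "u \<in> R" "v \<in> R"
  then obtain f where "u \<in> f" "v \<in> f" "f \<subseteq> R" "card f = r"
    using obtain_subset_through_pair assms(1-3) by metis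
  then show "(\<exists>f\<in>F. u \<in> f \<and> v \<in> f) \<or>
     (\<exists>w f g. f \<in> F \<and> g \<in> F \<and> f \<noteq> g \<and> u \<in> f \<and> w \<in> f \<and> w \<in> g \<and> v \<in> g \<and> u \<noteq> w \<and> w \<noteq> v)"
    using complete by blast
qed

lemma hconnected_crossing:
  assumes fin: "finite R" and r: "2 \<le> r" "r \<le> card R"
    and crossing: "\<And>f. f \<subseteq> R \<Longrightarrow> card f = r \<Longrightarrow> f \<inter> P \<noteq> {} \<Longrightarrow> f - P \<noteq> {} \<Longrightarrow> f \<in> F"
    and a: "a \<in> R \<inter> P" and b: "b \<in> R - P"
  shows "hconnected R F"
proof (rule hconnectedI_diameter2)
  have joint: "\<exists>f\<in>F. x \<in> f \<and> y \<in> f" if xy: "x \<in> R" "y \<in> R" "(x \<in> P) \<noteq> (y \<in> P)" for x y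
  proof -
    obtain f where "x \<in> f" "y \<in> f" "f \<subseteq> R" "card f = r"
      using obtain_subset_through_pair[OF fin xy(1,2) r] .
    with xy(3) crossing show ?thesis by blast
  qed
  fix u v assume u: "u \<in> R" and v: "v \<in> R"
  show "(\<exists>f\<in>F. u \<in> f \<and> v \<in> f) \<or>
     (\<exists>w f g. f \<in> F \<and> g \<in> F \<and> f \<noteq> g \<and> u \<in> f \<and> w \<in> f \<and> w \<in> g \<and> v \<in> g \<and> u \<noteq> w \<and> w \<noteq> v)"
  proof (cases "(u \<in> P) = (v \<in> P)")
    case False
    then show ?thesis using joint[OF u v] by blast
  next
    case same: True
    define w where "w = (if u \<in> P then b else a)"
    have w: "w \<in> R" "(w \<in> P) \<noteq> (u \<in> P)" using a b by (auto simp: w_def)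
    obtain f where "f \<in> F" "u \<in> f" "w \<in> f" using joint[OF u w(1)] w(2) by auto
    moreover obtain g where "g \<in> F" "w \<in> g" "v \<in> g" using joint[OF w(1) v] w(2) same by auto
    moreover have "u \<noteq> w" "w \<noteq> v" using w same by auto
    ultimately show ?thesis by (cases "f = g") blast+
  qed
qed

lemma hconnected_edge_union_clique:
  assumes e: "e \<in> F"
    and clique: "\<And>x y. x \<in> W \<Longrightarrow> y \<in> W \<Longrightarrow> \<exists>f\<in>F. f \<subseteq> W \<and> x \<in> f \<and> y \<in> f"
    and meet: "W \<noteq> {} \<Longrightarrow> e \<inter> W \<noteq> {}"
  shows "hconnected (e \<union> W) F"
proof (rule hconnectedI_diameter2)
  fix u v assume u: "u \<in> e \<union> W" and v: "v \<in> e \<union> W"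
  show "(\<exists>f\<in>F. u \<in> f \<and> v \<in> f) \<or>
     (\<exists>w f g. f \<in> F \<and> g \<in> F \<and> f \<noteq> g \<and> u \<in> f \<and> w \<in> f \<and> w \<in> g \<and> v \<in> g \<and> u \<noteq> w \<and> w \<noteq> v)"
  proof (cases "u \<in> W \<and> v \<in> W \<or> u \<in> e \<and> v \<in> e")
    case True
    then have "\<exists>f\<in>F. u \<in> f \<and> v \<in> f"
    proof
      assume "u \<in> W \<and> v \<in> W"
      then obtain f where "f \<in> F" "u \<in> f" "v \<in> f" using clique by meson
      then show ?thesis by blast
    qed (use e in blast)
    then show ?thesis ..
  next
    case False
    then have "W \<noteq> {}" using u v by blast
    then obtain w where w: "w \<in> e" "w \<in> W" using meet by blast
    from False u v consider "u \<in> W - e" "v \<in> e - W" | "u \<in> e - W" "v \<in> W - e" by blast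
    then show ?thesis
    proof cases
      case 1
      obtain f where f: "f \<in> F" "f \<subseteq> W" "u \<in> f" "w \<in> f" using clique[of u w] 1 w(2) by blast
      have "f \<noteq> e" "u \<noteq> w" "w \<noteq> v" using f(2) 1 w by auto
      then show ?thesis using f(1,3,4) e w(1) 1 by (intro disjI2 exI[of _ w] exI[of _ f] exI[of _ e]) simp
    next
      case 2
      obtain f where f: "f \<in> F" "f \<subseteq> W" "w \<in> f" "v \<in> f" using clique[of w v] 2 w(2) by blast
      have "e \<noteq> f" "u \<noteq> w" "w \<noteq> v" using f(2) 2 w by auto
      then show ?thesis using f(1,3,4) e w(1) 2 by (intro disjI2 exI[of _ w] exI[of _ e] exI[of _ f]) simp
    qed
  qed
qed

lemma not_hconnected_if_separated:
  assumes "u \<in> R" "v \<in> R" "u \<in> P" "v \<notin> P" and separated: "\<forall>f\<in>F. f \<subseteq> P \<or> f \<inter> P = {}"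
  shows "\<not> hconnected R F"
proof
  assume "hconnected R F"
  then obtain vs es where p: "is_path F vs es" "hd vs = u" "last vs = v"
    using assms unfolding hconnected_def by blast
  have ne: "vs \<noteq> []" and len: "length es = length vs - 1"
    and step: "\<forall>i < length es. es ! i \<in> F \<and> vs ! i \<in> es ! i \<and> vs ! Suc i \<in> es ! i"
    using p(1) by (auto simp: is_path_def)
  have "i < length vs \<longrightarrow> vs ! i \<in> P" for i
  proof (induction i)
    case 0
    then show ?case using p(2) ne assms(3) by (simp add: hd_conv_nth)
  next
    case (Suc i)
    show ?case
    proof
      assume "Suc i < length vs"
      then have i: "i < length es" using len by simp
      then have "es ! i \<subseteq> P" using Suc.IH len step separated by fastforce
      then show "vs ! Suc i \<in> P" using step i by blast
    qed
  qed
  then have "last vs \<in> P" using ne by (simp add: last_conv_nth)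
  then show False using p(3) assms(4) by simp
qed

lemma kappa_le_card: "finite V \<Longrightarrow> kappa V E \<le> card V - 1"
proof (cases "\<exists>X. vertex_cut V E X")
  case True
  assume fin: "finite V"
  then obtain X where X: "vertex_cut V E X" using True by blast
  then have "X \<subset> V" unfolding vertex_cut_def hconnected_def by auto
  then have "card X < card V" by (rule psubset_card_mono[OF fin])
  moreover have "(LEAST m. \<exists>X. vertex_cut V E X \<and> card X = m) \<le> card X"
    using X by (intro Least_le) blast
  ultimately show ?thesis using True unfolding kappa_def by simp
qed (simp add: kappa_def)

lemma kappa_le_if_vertex_cut: "vertex_cut V E X \<Longrightarrow> card X \<le> k \<Longrightarrow> kappa V E \<le> k"
proof -
  assume X: "vertex_cut V E X" and "card X \<le> k"
  moreover have "(LEAST m. \<exists>X. vertex_cut V E X \<and> card X = m) \<le> card X"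
    using X by (intro Least_le) blast
  ultimately show ?thesis unfolding kappa_def by auto
qed

lemma kappa_gt_if_no_small_cut:
  assumes "finite V" "k + 2 \<le> card V"
    and "\<And>X. X \<subseteq> V \<Longrightarrow> card X \<le> k \<Longrightarrow> hconnected (V - X) (del_edges V E X)"
  shows "k + 1 \<le> kappa V E"
proof (cases "\<exists>X. vertex_cut V E X")
  case True
  then obtain X where X: "vertex_cut V E X" "card X = (LEAST m. \<exists>X. vertex_cut V E X \<and> card X = m)"
    using LeastI_ex[of "\<lambda>m. \<exists>X. vertex_cut V E X \<and> card X = m"] by blast
  have "\<not> card X \<le> k" using X(1) assms(3) unfolding vertex_cut_def by blast
  then show ?thesis using X(2) True unfolding kappa_def by simp
qed (use assms in \<open>simp add: kappa_def\<close>)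

lemma finite_kappa_values:
  assumes "finite V"
  shows "finite {kappa V' E' | V' E'. V' \<subseteq> V \<and> E' \<subseteq> E \<and> is_hypergraph V' E'}"
proof -
  have "kappa V' E' \<le> card V" if "V' \<subseteq> V" for V' :: "'a set" and E'
  proof -
    have "finite V'" "card V' \<le> card V" using assms that finite_subset card_mono by blast+
    then show ?thesis using kappa_le_card[of V' E'] by simp
  qed
  then show ?thesis by (auto intro: finite_subset[of _ "{..card V}"])
qed

lemma kappa_bar_le:
  assumes "finite V"
    and "\<And>V' E'. V' \<subseteq> V \<Longrightarrow> E' \<subseteq> E \<Longrightarrow> is_hypergraph V' E' \<Longrightarrow> kappa V' E' \<le> k"
  shows "kappa_bar V E \<le> k"
proof -
  have "is_hypergraph {} ({} :: 'a set set)" by (simp add: is_hypergraph_def)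
  then have "{kappa V' E' | V' E'. V' \<subseteq> V \<and> E' \<subseteq> E \<and> is_hypergraph V' E'} \<noteq> {}" by blast
  then show ?thesis
    unfolding kappa_bar_def using finite_kappa_values[OF assms(1)] assms(2) by (auto simp: Max_le_iff)
qed

lemma kappa_le_kappa_bar:
  assumes "finite V" "V' \<subseteq> V" "E' \<subseteq> E" "is_hypergraph V' E'"
  shows "kappa V' E' \<le> kappa_bar V E"
  unfolding kappa_bar_def using assms finite_kappa_values[OF assms(1)] by (auto intro: Max_ge)

definition robustly_hconnected :: "nat \<Rightarrow> 'a set \<Rightarrow> 'a set set \<Rightarrow> bool" where
  "robustly_hconnected k S F \<longleftrightarrow> (\<forall>X \<subseteq> S. card X \<le> k \<longrightarrow> hconnected (S - X) {f \<in> F. f \<subseteq> S - X})"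

lemma kappa_bar_gt_if_robustly_hconnected:
  assumes "finite V" "S \<subseteq> V" "k + 2 \<le> card S" "\<forall>f\<in>F. f \<noteq> {}" "robustly_hconnected k S F"
  shows "k + 1 \<le> kappa_bar V F"
proof -
  let ?F = "{f \<in> F. f \<subseteq> S}"
  have fin: "finite S" using assms(1,2) finite_subset by blast
  have "k + 1 \<le> kappa S ?F"
  proof (rule kappa_gt_if_no_small_cut[OF fin assms(3)])
    fix X assume "X \<subseteq> S" "card X \<le> k"
    moreover have "del_edges S ?F X = {f \<in> F. f \<subseteq> S - X}" by (auto simp: del_edges_def)
    ultimately show "hconnected (S - X) (del_edges S ?F X)"
      using assms(5) by (simp add: robustly_hconnected_def)
  qed
  also have "kappa S ?F \<le> kappa_bar V F"
    using fin assms(1,2,4) by (intro kappa_le_kappa_bar) (auto simp: is_hypergraph_def)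
  finally show ?thesis .
qed

lemma card_crossing_subsets:
  assumes "finite A" "finite B" "A \<inter> B = {}" "1 \<le> r"
  shows "card {f. f \<subseteq> A \<union> B \<and> card f = r \<and> f \<inter> A \<noteq> {} \<and> f \<inter> B \<noteq> {}}
      + (card A choose r) + (card B choose r) = card (A \<union> B) choose r"
proof -
  let ?C = "{f. f \<subseteq> A \<union> B \<and> card f = r \<and> f \<inter> A \<noteq> {} \<and> f \<inter> B \<noteq> {}}"
  let ?SA = "{f. f \<subseteq> A \<and> card f = r}" and ?SB = "{f. f \<subseteq> B \<and> card f = r}"
  have nonempty: "card f = r \<Longrightarrow> f \<noteq> {}" for f :: "'a set" using assms(4) by auto
  have split: "{f. f \<subseteq> A \<union> B \<and> card f = r} = ?C \<union> (?SA \<union> ?SB)" using nonempty by blast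
  have disjoint: "?SA \<inter> ?SB = {}" "?C \<inter> (?SA \<union> ?SB) = {}" using nonempty assms(3) by blast+
  have fin: "finite ?C" "finite ?SA" "finite ?SB"
    using assms(1,2) by (auto intro: finite_subset[of _ "Pow (A \<union> B)"])
  have "card {f. f \<subseteq> A \<union> B \<and> card f = r} = card ?C + (card ?SA + card ?SB)"
    unfolding split using fin disjoint by (simp add: card_Un_disjoint)
  then show ?thesis using assms(1,2) by (simp add: n_subsets)
qed

lemma card_subsets_of_blocks:
  assumes "finite I" "\<forall>i\<in>I. finite (B i)" "\<forall>i\<in>I. \<forall>j\<in>I. i \<noteq> j \<longrightarrow> B i \<inter> B j = {}" "1 \<le> r"
  shows "card (\<Union>i\<in>I. {f. f \<subseteq> B i \<and> card f = r}) = (\<Sum>i\<in>I. card (B i) choose r)"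
proof -
  have "card (\<Union>i\<in>I. {f. f \<subseteq> B i \<and> card f = r}) = (\<Sum>i\<in>I. card {f. f \<subseteq> B i \<and> card f = r})"
  proof (rule card_UN_disjoint)
    show "\<forall>i\<in>I. finite {f. f \<subseteq> B i \<and> card f = r}"
      using assms(2) by (auto intro: finite_subset[of _ "Pow (B _)"])
    show "\<forall>i\<in>I. \<forall>j\<in>I. i \<noteq> j \<longrightarrow> {f. f \<subseteq> B i \<and> card f = r} \<inter> {f. f \<subseteq> B j \<and> card f = r} = {}"
    proof (intro ballI impI equals0I)
      fix i j f assume "i \<in> I" "j \<in> I" "i \<noteq> j"
        and "f \<in> {f. f \<subseteq> B i \<and> card f = r} \<inter> {f. f \<subseteq> B j \<and> card f = r}"
      then have "f \<subseteq> {}" "card f = r" using assms(3) by blast+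
      then show False using assms(4) by simp
    qed
  qed (rule assms(1))
  also have "\<dots> = (\<Sum>i\<in>I. card (B i) choose r)" using assms(2) by (auto intro: sum.cong n_subsets)
  finally show ?thesis .
qed

lemma mult_choose_le_mult_choose:
  fixes k q r :: nat
  assumes "1 \<le> r" "q \<le> k"
  shows "k * (q choose r) \<le> q * (k choose r)"
proof -
  have r: "0 < r" using assms by simp
  have "r * (k * (q choose r)) = k * q * ((q - 1) choose (r - 1))"
    using times_binomial_minus1_eq[OF r, of q] by (simp add: ac_simps)
  also have "\<dots> \<le> k * q * ((k - 1) choose (r - 1))" using assms by (simp add: binomial_right_mono)
  also have "\<dots> = r * (q * (k choose r))"
    using times_binomial_minus1_eq[OF r, of k] by (simp add: ac_simps)
  finally show ?thesis using r by simp
qed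

locale HU_hypergraph =
  fixes n k r p q :: nat and A :: "'a set" and B :: "nat \<Rightarrow> 'a set"
  assumes k2: "k \<ge> 2" and r2: "r \<ge> 2" and n2k: "n \<ge> 2 * k"
    and npq: "n = p * k + q" and q1: "1 \<le> q" and qk: "q \<le> k"
    and finA: "finite A" and cardA: "card A = k"
    and finB: "\<forall>i\<in>{1..p}. finite (B i)"
    and cardB: "\<forall>i\<in>{1..<p}. card (B i) = k" and cardBp: "card (B p) = q"
    and disjAB: "\<forall>i\<in>{1..p}. A \<inter> B i = {}"
    and disjBB: "\<forall>i\<in>{1..p}. \<forall>j\<in>{1..p}. i \<noteq> j \<longrightarrow> B i \<inter> B j = {}"
begin

abbreviation "Bs \<equiv> (\<Union>i\<in>{1..p}. B i)"
abbreviation "U \<equiv> HU_vertices A B p"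
abbreviation "E \<equiv> HU_edges r A B p"

lemma p_ge_1: "1 \<le> p"
proof (rule ccontr)
  assume "\<not> 1 \<le> p"
  then have "n = q" using npq by simp
  then show False using n2k qk k2 by simp
qed

lemma U_eq: "U = A \<union> Bs" by (simp add: HU_vertices_def)

lemma finite_Bs: "finite Bs" using finB by blast

lemma finite_U: "finite U" using finite_Bs finA U_eq by simp

lemma A_Bs_disjoint: "A \<inter> Bs = {}" using disjAB by blast

lemma card_B_le: "i \<in> {1..p} \<Longrightarrow> card (B i) \<le> k"
  using cardB cardBp qk by (cases "i = p") auto

lemma card_B_1: "card (B 1) = k"
proof (cases "p = 1")
  case True
  then have "q = k" using npq n2k qk by simp
  then show ?thesis using True cardBp by simp
qed (use cardB p_ge_1 in simp)

lemma HU_edges_iff: "f \<in> E \<longleftrightarrow> f \<subseteq> U \<and> card f = r \<and>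
      ((f \<inter> A \<noteq> {} \<and> f \<inter> Bs \<noteq> {}) \<or> (\<exists>i\<in>{1..p}. f \<subseteq> B i))"
  by (simp add: HU_edges_def)

lemma crossing_in_HU_edges: "f \<subseteq> U \<Longrightarrow> card f = r \<Longrightarrow> f \<inter> A \<noteq> {} \<Longrightarrow> f - A \<noteq> {} \<Longrightarrow> f \<in> E"
  unfolding HU_edges_iff U_eq by blast

lemma block_subset_in_HU_edges: "i \<in> {1..p} \<Longrightarrow> f \<subseteq> B i \<Longrightarrow> card f = r \<Longrightarrow> f \<in> E"
  unfolding HU_edges_iff U_eq by blast

lemma HU_edge_nonempty: "f \<in> E \<Longrightarrow> f \<noteq> {}"
  using r2 by (auto simp: HU_edges_iff)

lemma HU_edge_not_subset_A:
  assumes "f \<in> E" shows "\<not> f \<subseteq> A"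
proof
  assume "f \<subseteq> A"
  moreover have "f \<inter> Bs \<noteq> {} \<or> (\<exists>i\<in>{1..p}. f \<subseteq> B i)" using assms by (auto simp: HU_edges_iff)
  moreover have "f \<inter> Bs = {}" using \<open>f \<subseteq> A\<close> A_Bs_disjoint by blast
  ultimately obtain i where "i \<in> {1..p}" "f \<subseteq> A \<inter> B i" by blast
  then have "f = {}" using disjAB by auto
  then show False using HU_edge_nonempty[OF assms] by simp
qed

lemma uniform_HU: "uniform r U E"
  unfolding uniform_def is_hypergraph_def
proof (intro conjI ballI finite_U)
  fix f assume f: "f \<in> E"
  show "f \<noteq> {}" by (rule HU_edge_nonempty[OF f])
  show "f \<subseteq> U" "card f = r" using f unfolding HU_edges_iff by blast+
qed

lemma kappa_le_if_outside_A_in_block: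
  assumes V': "V' \<subseteq> U" "k + 2 \<le> card V'" and E': "E' \<subseteq> E"
    and i: "i \<in> {1..p}" "V' - A \<subseteq> B i"
  shows "kappa V' E' \<le> k"
proof -
  let ?X = "V' - A"
  have "finite (B i)" using finB i(1) by blast
  then have cX: "card ?X \<le> k" using card_mono[OF _ i(2)] card_B_le[OF i(1)] by simp
  have "finite V'" using V'(1) finite_U finite_subset by blast
  then have "card (V' - ?X) \<ge> 2" using cX V'(2) card_Diff_subset[of ?X V'] by auto
  then obtain T where "T \<subseteq> V' - ?X" "card T = 2" by (meson obtain_subset_with_card_n)
  then obtain a b where ab: "a \<in> V' - ?X" "b \<in> V' - ?X" "a \<noteq> b" by (auto simp: card_2_iff)
  have "del_edges V' E' ?X = {}"
    using E' HU_edge_not_subset_A unfolding del_edges_def by blast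
  then have "\<not> hconnected (V' - ?X) (del_edges V' E' ?X)"
    using ab by (intro not_hconnected_if_separated[of a _ b "{a}"]) auto
  then have "vertex_cut V' E' ?X" unfolding vertex_cut_def by blast
  then show ?thesis using kappa_le_if_vertex_cut cX by blast
qed

lemma kappa_le_if_two_blocks:
  assumes V': "V' \<subseteq> U" and E': "E' \<subseteq> E" and i: "i \<in> {1..p}"
    and u: "u \<in> V'" "u \<in> B i" and v: "v \<in> V'" "v \<notin> A" "v \<notin> B i"
  shows "kappa V' E' \<le> k"
proof -
  let ?X = "V' \<inter> A"
  have cX: "card ?X \<le> k" using card_mono[OF finA] cardA by (metis inf_le2)
  have "f \<subseteq> B i \<or> f \<inter> B i = {}" if "f \<in> del_edges V' E' ?X" for f
  proof -
    have "f \<in> E" "f \<inter> A = {}" using that E' by (auto simp: del_edges_def)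
    then obtain j where "j \<in> {1..p}" "f \<subseteq> B j" unfolding HU_edges_iff by blast
    then show ?thesis using disjBB i by (cases "j = i") blast+
  qed
  then have "\<not> hconnected (V' - ?X) (del_edges V' E' ?X)"
    using u v disjAB i by (intro not_hconnected_if_separated[of u _ v "B i"]) auto
  then have "vertex_cut V' E' ?X" unfolding vertex_cut_def by blast
  then show ?thesis using kappa_le_if_vertex_cut cX by blast
qed

lemma kappa_bar_HU_le: "kappa_bar U E \<le> k"
proof (rule kappa_bar_le[OF finite_U])
  fix V' E' assume V': "V' \<subseteq> U" and E': "E' \<subseteq> E"
  have fin: "finite V'" using V' finite_U finite_subset by blast
  show "kappa V' E' \<le> k"
  proof (cases "card V' \<le> k + 1")
    case True
    then show ?thesis using kappa_le_card[OF fin, of E'] by simp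
  next
    case False
    have "\<not> V' \<subseteq> A"
    proof
      assume "V' \<subseteq> A"
      then have "card V' \<le> card A" by (rule card_mono[OF finA])
      then show False using False cardA by simp
    qed
    then obtain u where u: "u \<in> V'" "u \<notin> A" by blast
    then have "u \<in> Bs" using V' U_eq by blast
    then obtain i where i: "i \<in> {1..p}" "u \<in> B i" by blast
    show ?thesis
    proof (cases "V' - A \<subseteq> B i")
      case True
      have "k + 2 \<le> card V'" using False by simp
      then show ?thesis by (rule kappa_le_if_outside_A_in_block[OF V' _ E' i(1) True])
    next
      case False
      then obtain v where "v \<in> V'" "v \<notin> A" "v \<notin> B i" by blast
      then show ?thesis by (rule kappa_le_if_two_blocks[OF V' E' i(1) u(1) i(2)])
    qed
  qed
qed

lemma hconnected_if_meets_A_and_Bs: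
  assumes "R \<subseteq> U" "r \<le> card R" "E \<subseteq> F" "a \<in> R \<inter> A" "b \<in> R - A"
  shows "hconnected R {f \<in> F. f \<subseteq> R}"
proof (rule hconnected_crossing[of R r A _ a b])
  show "finite R" using assms(1) finite_U finite_subset by blast
  fix f assume "f \<subseteq> R" "card f = r" "f \<inter> A \<noteq> {}" "f - A \<noteq> {}"
  then have "f \<in> E" using assms(1) by (intro crossing_in_HU_edges) auto
  then show "f \<in> {f \<in> F. f \<subseteq> R}" using assms(3) \<open>f \<subseteq> R\<close> by blast
qed (use assms r2 in auto)

lemma robustly_hconnected_edge_in_A:
  assumes e: "e \<subseteq> A" "card e = r"
  shows "robustly_hconnected k (e \<union> B 1) (insert e E)"
  unfolding robustly_hconnected_def
proof (intro allI impI)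
  fix X assume X: "X \<subseteq> e \<union> B 1" "card X \<le> k"
  let ?R = "e \<union> B 1 - X"
  have one: "1 \<in> {1..p}" using p_ge_1 by simp
  then have B1: "1 \<in> {1..p}" "finite (B 1)" "e \<inter> B 1 = {}" using finB disjAB e(1) by blast+
  have fe: "finite e" using e(1) finA finite_subset by blast
  have fR: "finite ?R" using fe B1(2) by simp
  have "card (e \<union> B 1) = r + k" using card_Un_disjoint[OF fe B1(2,3)] e(2) card_B_1 by simp
  then have rR: "r \<le> card ?R" using X card_Diff_subset[of X "e \<union> B 1"] fe B1(2) finite_subset by fastforce
  have RU: "?R \<subseteq> U" using e(1) B1(1) U_eq by blast
  consider "?R \<inter> A \<noteq> {}" "?R - A \<noteq> {}" | "?R \<subseteq> A" | "?R \<inter> A = {}" by blast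
  then show "hconnected ?R {f \<in> insert e E. f \<subseteq> ?R}"
  proof cases
    case 1
    then show ?thesis using hconnected_if_meets_A_and_Bs[OF RU rR] by blast
  next
    case 2
    then have "?R \<subseteq> e" using B1 disjAB by blast
    then have "?R = e" using card_seteq[OF fe] rR e(2) by simp
    then show ?thesis using card_subset_eq[OF fe] e(2) r2 by (intro hconnected_complete[OF fR r2 rR]) auto
  next
    case 3
    then have "?R \<subseteq> B 1" using e(1) by blast
    then show ?thesis using block_subset_in_HU_edges[OF B1(1)] r2 
      by (intro hconnected_complete[OF fR r2 rR]) auto
  qed
qed

lemma robustly_hconnected_edge_across_blocks:
  assumes e: "e \<subseteq> U" "card e = r" "e \<inter> A = {}"
    and W: "i \<in> {1..p}" "W \<subseteq> B i" "k + 1 \<le> card (e \<union> W)" "W \<noteq> {} \<Longrightarrow> e \<inter> W \<noteq> {}"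
    and clique: "\<And>x y. x \<in> W \<Longrightarrow> y \<in> W \<Longrightarrow> \<exists>f \<subseteq> W. card f = r \<and> x \<in> f \<and> y \<in> f"
  shows "robustly_hconnected k (A \<union> (e \<union> W)) (insert e E)"
  unfolding robustly_hconnected_def
proof (intro allI impI)
  fix X assume X: "X \<subseteq> A \<union> (e \<union> W)" "card X \<le> k"
  let ?N = "e \<union> W" let ?R = "A \<union> ?N - X"
  have NA: "A \<inter> ?N = {}" using e(3) W(1,2) disjAB by blast
  have fN: "finite ?N" using e(1) W(1,2) finite_U finB finite_subset by blast
  have fX: "finite X" using X(1) finA fN by (meson finite_UnI finite_subset)
  have "card ?R = card (A \<union> ?N) - card X" using card_Diff_subset[OF fX X(1)] .
  also have "card (A \<union> ?N) = k + card ?N" using card_Un_disjoint[OF finA fN NA] cardA by simp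
  finally have "card ?N \<le> card ?R" using X(2) by simp
  moreover have "card e \<le> card ?N" by (rule card_mono[OF fN]) simp
  ultimately have rR: "r \<le> card ?R" using e(2) by simp
  have RU: "?R \<subseteq> U" using e(1) W(1,2) U_eq by blast
  consider "?R \<inter> A \<noteq> {}" "?R - A \<noteq> {}" | "?R \<subseteq> A" | "?R \<inter> A = {}" by blast
  then show "hconnected ?R {f \<in> insert e E. f \<subseteq> ?R}"
  proof cases
    case 1
    then show ?thesis using hconnected_if_meets_A_and_Bs[OF RU rR] by blast
  next
    case 2
    then have "?N \<subseteq> X" using NA by blast
    then have "card ?N \<le> card X" by (rule card_mono[OF fX])
    then show ?thesis using W(3) X(2) by simp
  next
    case 3
    then have "A \<subseteq> X" by blast
    moreover have "card X \<le> card A" using X(2) cardA by simp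
    ultimately have "X = A" using card_subset_eq[OF fX] card_mono[OF fX] by (metis le_antisym)
    then have R: "?R = ?N" using NA by blast
    show ?thesis unfolding R
    proof (rule hconnected_edge_union_clique)
      fix x y assume "x \<in> W" "y \<in> W"
      then obtain f where f: "f \<subseteq> W" "card f = r" "x \<in> f" "y \<in> f" using clique by blast
      then have "f \<in> E" using W(2) by (intro block_subset_in_HU_edges[OF W(1)]) auto
      then show "\<exists>f\<in>{f \<in> insert e E. f \<subseteq> ?N}. f \<subseteq> W \<and> x \<in> f \<and> y \<in> f" using f by blast
    next
      show "e \<in> {f \<in> insert e E. f \<subseteq> ?N}" by blast
    qed (rule W(4))
  qed
qed

lemma full_block_meeting_edge:
  assumes "e \<subseteq> Bs" "e \<noteq> {}" "\<forall>j\<in>{1..p}. \<not> e \<subseteq> B j"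
  obtains i where "i \<in> {1..<p}" "e \<inter> B i \<noteq> {}"
proof -
  obtain x where x: "x \<in> e" using assms(2) by blast
  then obtain j where j: "j \<in> {1..p}" "x \<in> B j" using assms(1) by blast
  show ?thesis
  proof (cases "j = p")
    case False
    then have "j \<in> {1..<p}" using j(1) by auto
    then show ?thesis using that j(2) x by blast
  next
    case True
    then obtain y where y: "y \<in> e" "y \<notin> B p" using assms(3) j(1) by blast
    then obtain j' where j': "j' \<in> {1..p}" "y \<in> B j'" using assms(1) by blast
    then have "j' \<in> {1..<p}" using y(2) by (cases "j' = p") auto
    then show ?thesis using that j'(2) y(1) by blast
  qed
qed

lemma kappa_bar_insert_HU:
  assumes "e \<in> compl_edges r U E"
  shows "k + 1 \<le> kappa_bar U (insert e E)"
proof -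
  have e: "e \<subseteq> U" "card e = r" "e \<notin> E" using assms unfolding compl_edges_def by auto
  have fe: "finite e" using e(1) finite_U finite_subset by blast
  have "e \<noteq> {}" using e(2) r2 by auto
  then have nonempty: "\<forall>f\<in>insert e E. f \<noteq> {}" using HU_edge_nonempty by blast
  show ?thesis
  proof (cases "e \<subseteq> A")
    case True
    have one: "1 \<in> {1..p}" using p_ge_1 by simp
    then have "e \<inter> B 1 = {}" "finite (B 1)" using True disjAB finB by blast+
    then have "card (e \<union> B 1) = r + k" using card_Un_disjoint[OF fe] e(2) card_B_1 by simp
    then have "k + 2 \<le> card (e \<union> B 1)" using r2 by simp
    moreover have "e \<union> B 1 \<subseteq> U" using e(1) one U_eq by blast
    ultimately show ?thesis using kappa_bar_gt_if_robustly_hconnected[OF finite_U _ _ nonempty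
        robustly_hconnected_edge_in_A[OF True e(2)]] by blast
  next
    case False
    have eA: "e \<inter> A = {}"
    proof (rule ccontr)
      assume "e \<inter> A \<noteq> {}"
      then have "e \<in> E" using False e(1,2) by (intro crossing_in_HU_edges) auto
      then show False using e(3) by simp
    qed
    have eBs: "e \<subseteq> Bs" using e(1) eA U_eq by blast
    have not_block: "\<forall>j\<in>{1..p}. \<not> e \<subseteq> B j" using e(2,3) block_subset_in_HU_edges by blast
    obtain i where i: "i \<in> {1..<p}" "e \<inter> B i \<noteq> {}"
      by (rule full_block_meeting_edge[OF eBs \<open>e \<noteq> {}\<close> not_block])
    have i': "i \<in> {1..p}" "card (B i) = k" "finite (B i)" using i(1) cardB finB by auto
    \<comment> \<open>the block B i is added to e only when it carries edges, i.e. when r \<le> k\<close>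
    obtain W where W: "W \<subseteq> B i" "k + 1 \<le> card (e \<union> W)" "W \<noteq> {} \<Longrightarrow> e \<inter> W \<noteq> {}"
      "\<And>x y. x \<in> W \<Longrightarrow> y \<in> W \<Longrightarrow> \<exists>f \<subseteq> W. card f = r \<and> x \<in> f \<and> y \<in> f"
    proof (cases "r \<le> k")
      case True
      have "B i \<subset> e \<union> B i" using not_block i'(1) by blast
      then have card_gt: "card (B i) < card (e \<union> B i)" using fe i'(3) by (intro psubset_card_mono) auto
      have clique: "\<exists>f \<subseteq> B i. card f = r \<and> x \<in> f \<and> y \<in> f" if xy: "x \<in> B i" "y \<in> B i" for x y
      proof -
        obtain f where "x \<in> f" "y \<in> f" "f \<subseteq> B i" "card f = r"
          by (rule obtain_subset_through_pair[OF i'(3) xy r2]) (use True i'(2) in auto)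
        then show ?thesis by blast
      qed
      show ?thesis by (rule that[of "B i"]) (use card_gt clique i(2) i'(2) in auto)
    next
      case False
      show ?thesis by (rule that[of "{}"]) (use False e(2) in auto)
    qed
    have NA: "A \<inter> (e \<union> W) = {}" using eA W(1) disjAB i'(1) by blast
    have fN: "finite (e \<union> W)" using fe W(1) i'(3) finite_subset by blast
    have "card (A \<union> (e \<union> W)) = k + card (e \<union> W)" using card_Un_disjoint[OF finA fN NA] cardA by simp
    then have "k + 2 \<le> card (A \<union> (e \<union> W))" using W(2) k2 by simp
    moreover have "A \<union> (e \<union> W) \<subseteq> U" using e(1) W(1) i'(1) U_eq by blast
    ultimately show ?thesis using kappa_bar_gt_if_robustly_hconnected[OF finite_U _ _ nonempty
        robustly_hconnected_edge_across_blocks[OF e(1,2) eA i'(1) W]] by blast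
  qed
qed

lemma sum_over_blocks: "(\<Sum>i\<in>{1..p}. g (card (B i))) = real (p - 1) * g k + g q"
proof -
  have "{1..p} = insert p {1..<p}" using p_ge_1 by auto
  then have "(\<Sum>i\<in>{1..p}. g (card (B i))) = g (card (B p)) + (\<Sum>i\<in>{1..<p}. g (card (B i)))"
    by simp
  also have "(\<Sum>i\<in>{1..<p}. g (card (B i))) = (\<Sum>i\<in>{1..<p}. g k)"
    using cardB by (intro sum.cong) auto
  finally show ?thesis using cardBp by simp
qed

lemma card_Bs: "card Bs = n - k"
proof -
  have "card Bs = (\<Sum>i\<in>{1..p}. card (B i))"
    using finB disjBB by (intro card_UN_disjoint) auto
  then have "real (card Bs) = real (p - 1) * real k + real q"
    using sum_over_blocks[of real] by simp
  then have "real (card Bs) = real n - real k" using npq p_ge_1 by (simp add: of_nat_diff algebra_simps)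
  then show ?thesis by linarith
qed

lemma card_HU_edges: "real (card E) = real (n choose r) - real (k choose r) - real ((n - k) choose r)
   + real (p - 1) * real (k choose r) + real (q choose r)"
proof -
  let ?C = "{f. f \<subseteq> A \<union> Bs \<and> card f = r \<and> f \<inter> A \<noteq> {} \<and> f \<inter> Bs \<noteq> {}}"
  let ?S = "\<Union>i\<in>{1..p}. {f. f \<subseteq> B i \<and> card f = r}"
  have "E = ?C \<union> ?S" unfolding HU_edges_def U_eq HU_vertices_def by blast
  moreover have "?C \<inter> ?S = {}" using disjAB by blast
  moreover have "finite ?C" "finite ?S"
    using finA finite_Bs finB by (auto intro: finite_subset[of _ "Pow (A \<union> Bs)"])
  ultimately have "card E = card ?C + card ?S" by (simp add: card_Un_disjoint)
  moreover have "card ?C + (k choose r) + ((n - k) choose r) = n choose r"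
    using card_crossing_subsets[OF finA finite_Bs A_Bs_disjoint, of r] r2 cardA card_Bs
      card_Un_disjoint[OF finA finite_Bs A_Bs_disjoint] npq n2k by simp
  moreover have "real (card ?S) = real (p - 1) * real (k choose r) + real (q choose r)"
    using card_subsets_of_blocks[of "{1..p}" B r] finB disjBB r2
      sum_over_blocks[of "\<lambda>x. real (x choose r)"] by simp
  ultimately show ?thesis by simp
qed

lemma card_HU_edges_le:
  "real (card E) \<le> real (n choose r) - real ((n - k) choose r) + (real n / real k - 2) * real (k choose r)"
proof -
  have "real k * real (q choose r) \<le> real q * real (k choose r)"
    using mult_choose_le_mult_choose[of r q k] r2 qk by (simp flip: of_nat_mult)
  then have "real (q choose r) \<le> real q / real k * real (k choose r)"
    using k2 by (simp add: field_simps)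
  moreover have "real n / real k = real p + real q / real k" using npq k2 by (simp add: field_simps)
  ultimately show ?thesis using p_ge_1 by (simp add: card_HU_edges of_nat_diff algebra_simps)
qed

lemma card_HU_edges_eq:
  assumes "k dvd n"
  shows "real (card E) = real (n choose r) - real ((n - k) choose r) + (real n / real k - 2) * real (k choose r)"
proof -
  have "k dvd q" using assms npq by (simp add: dvd_add_right_iff)
  then have "q = k" using q1 qk dvd_imp_le by (metis le_antisym not_one_le_zero neq0_conv)
  moreover have "real n / real k = real p + 1" using npq k2 \<open>q = k\<close> by (simp add: field_simps)
  ultimately show ?thesis using p_ge_1 by (simp add: card_HU_edges of_nat_diff algebra_simps)
qed

end

theorem lemma4p1:
  fixes n k r p q :: nat and A :: "'a set" and B :: "nat \<Rightarrow> 'a set"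
  assumes "k \<ge> 2" and "r \<ge> 2" and "n \<ge> 2 * k"
    and "n = p * k + q" and "1 \<le> q" and "q \<le> k"
    and "finite A" and "card A = k"
    and "\<forall>i\<in>{1..p}. finite (B i)"
    and "\<forall>i\<in>{1..<p}. card (B i) = k" and "card (B p) = q"
    and "\<forall>i\<in>{1..p}. A \<inter> B i = {}"
    and "\<forall>i\<in>{1..p}. \<forall>j\<in>{1..p}. i \<noteq> j \<longrightarrow> B i \<inter> B j = {}"
  shows "vertex_k_maximal r k (HU_vertices A B p) (HU_edges r A B p)
    \<and> real (card (HU_edges r A B p))
        \<le> real (n choose r) - real ((n - k) choose r) + (real n / real k - 2) * real (k choose r)
    \<and> (k dvd n \<longrightarrow> real (card (HU_edges r A B p))
        = real (n choose r) - real ((n - k) choose r) + (real n / real k - 2) * real (k choose r))"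
proof -
  interpret HU_hypergraph n k r p q A B using assms by unfold_locales
  have "vertex_k_maximal r k U E"
    unfolding vertex_k_maximal_def using uniform_HU kappa_bar_HU_le kappa_bar_insert_HU by blast
  then show ?thesis using card_HU_edges_le card_HU_edges_eq by blast
qed

end
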